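(* For all $y,z\in\mathbb{Z}_p$, $S^{y+z}=S^y\circ S^z$ as maps $C(\mathbb{Z}_p,\mathbb{C}_p)\to C(\mathbb{Z}_p,\mathbb{C}_p)$.
   Context: Fix a prime $p$. $\mathbb{C}_p$ denotes the completion of an algebraic closure of $\mathbb{Q}_p$, with absolute value $|\cdot|$ normalized by $|p|=1/p$. $C(\mathbb{Z}_p,\mathbb{C}_p)$ is the $\mathbb{C}_p$-Banach space of continuous functions $\mathbb{Z}_p\to\mathbb{C}_p$ with the sup-norm $\|\cdot\|$. For $n\in\mathbb{Z}_{\ge0}$ and $x\in\mathbb{Z}_p$, $\binom{x}{n}=x(x-1)\cdots(x-n+1)/n!$. For $y\in\mathbb{Z}_p$ and $\phi\in C(\mathbb{Z}_p,\mathbb{C}_p)$ define $S^y(\phi)\in C(\mathbb{Z}_p,\mathbb{C}_p)$ by $S^y(\phi)(x)=\sum_{k\ge0}(-1)^k k!\binom yk\binom xk\phi(x-k)$ (the series converges uniformly in $(x,y)$). *)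

theory Defs
  imports "HOL-Computational_Algebra.Polynomial"
begin

text \<open>A model of C_p is given abstractly by a field together with an absolute
value nrm.  The conditions below characterise (C_p, |.|) up to isometric
isomorphism: a complete, algebraically closed field with a non-archimedean
absolute value satisfying |p| = 1/p, in which the algebraic numbers (elements
algebraic over Q, hence the algebraic closure of Q_p) are dense.\<close>

definition nonarch_abs :: "('a::field \<Rightarrow> real) \<Rightarrow> bool" where
  "nonarch_abs nrm \<longleftrightarrow>
     (\<forall>x. 0 \<le> nrm x) \<and> (\<forall>x. nrm x = 0 \<longleftrightarrow> x = 0) \<and>
     (\<forall>x y. nrm (x * y) = nrm x * nrm y) \<and>
     (\<forall>x y. nrm (x + y) \<le> max (nrm x) (nrm y))"

definition nrm_conv :: "('a::field \<Rightarrow> real) \<Rightarrow> (nat \<Rightarrow> 'a) \<Rightarrow> 'a \<Rightarrow> bool" where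
  "nrm_conv nrm s L \<longleftrightarrow> (\<forall>e>0. \<exists>N. \<forall>n\<ge>N. nrm (s n - L) < e)"

definition nrm_complete :: "('a::field \<Rightarrow> real) \<Rightarrow> bool" where
  "nrm_complete nrm \<longleftrightarrow>
     (\<forall>s. (\<forall>e>0. \<exists>N. \<forall>m\<ge>N. \<forall>n\<ge>N. nrm (s m - s n) < e) \<longrightarrow> (\<exists>L. nrm_conv nrm s L))"

definition is_Cp :: "nat \<Rightarrow> ('a::field_char_0 \<Rightarrow> real) \<Rightarrow> bool" where
  "is_Cp p nrm \<longleftrightarrow> prime p \<and> nonarch_abs nrm \<and> nrm (of_nat p) = 1 / real p \<and>
     nrm_complete nrm \<and>
     (\<forall>q :: 'a poly. 0 < degree q \<longrightarrow> (\<exists>x. poly q x = 0)) \<and>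
     (\<forall>x. \<forall>e>0. \<exists>a. algebraic a \<and> nrm (x - a) < e)"

definition Zp :: "('a::field_char_0 \<Rightarrow> real) \<Rightarrow> 'a set" where
  "Zp nrm = {x. \<forall>e>0. \<exists>n::int. nrm (x - of_int n) < e}"

text \<open>C(Z_p, C_p): functions continuous on Z_p (values outside Z_p are irrelevant).\<close>
definition CZp :: "('a::field_char_0 \<Rightarrow> real) \<Rightarrow> ('a \<Rightarrow> 'a) set" where
  "CZp nrm = {\<phi>. \<forall>x\<in>Zp nrm. \<forall>e>0. \<exists>d>0. \<forall>x'\<in>Zp nrm.
                  nrm (x' - x) < d \<longrightarrow> nrm (\<phi> x' - \<phi> x) < e}"

definition nrm_suminf :: "('a::field \<Rightarrow> real) \<Rightarrow> (nat \<Rightarrow> 'a) \<Rightarrow> 'a" where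
  "nrm_suminf nrm f = (THE L. nrm_conv nrm (\<lambda>n. \<Sum>k<n. f k) L)"

definition S_op :: "('a::field_char_0 \<Rightarrow> real) \<Rightarrow> 'a \<Rightarrow> ('a \<Rightarrow> 'a) \<Rightarrow> 'a \<Rightarrow> 'a" where
  "S_op nrm y \<phi> x = nrm_suminf nrm
     (\<lambda>k. (-1) ^ k * fact k * (y gchoose k) * (x gchoose k) * \<phi> (x - of_nat k))"

end

theory Submission
  imports Defs "HOL-Computational_Algebra.Formal_Power_Series"
begin

text \<open>Write \<open>S^y \<phi> (x) = \<Sum>\<^sub>k c\<^sub>k(y, x) \<phi>(x - k)\<close> with
  \<open>c\<^sub>k(y, x) = (-1)^k k! (y choose k) (x choose k)\<close>.  Since \<open>k! (x choose k)\<close> is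
  the falling factorial,
  \<open>c\<^sub>j(y, x) c\<^sub>k(z, x - j) = (-1)^(j+k) (j+k)! (x choose j+k) (y choose j) (z choose k)\<close>,
  so \<open>S^y (S^z \<phi>) (x)\<close> is a double series whose anti-diagonal sums are, by Vandermonde's
  identity, the terms of \<open>S^(y+z) \<phi> (x)\<close>.  The rearrangement is justified by a uniform
  bound: binomial coefficients of \<open>p\<close>-adic integers have absolute value at most 1,
  \<open>|n!| \<le> |p|^(n div p) \<rightarrow> 0\<close>, and a continuous function on the compact set \<open>Z_p\<close> is
  bounded, so the \<open>(j, k)\<close> term is at most \<open>|p|^((j+k) div p) sup |\<phi>|\<close>; in an
  ultrametric field such a double series may be summed in any order.\<close>

lemma tendsto_0_if_le:
  fixes f g :: "nat \<Rightarrow> real"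
  assumes "\<And>n. 0 \<le> f n" and "\<And>n. f n \<le> g n" and "g \<longlonglongrightarrow> 0"
  shows "f \<longlonglongrightarrow> 0"
  by (rule real_tendsto_sandwich[OF _ _ tendsto_const assms(3)]) (use assms in auto)

lemma sum_antidiagonals_eq_sum_rows:
  fixes T :: "nat \<Rightarrow> nat \<Rightarrow> 'a::comm_monoid_add"
  shows "(\<Sum>m<n. \<Sum>j\<le>m. T j (m - j)) = (\<Sum>j<n. \<Sum>k<n - j. T j k)"
proof -
  have "(\<Sum>m<n. \<Sum>j\<le>m. T j (m - j)) = (\<Sum>(j, k)\<in>{(j, k). j + k < n}. T j k)"
    by (rule sum.triangle_reindex[symmetric])
  also have "\<dots> = (\<Sum>j<n. \<Sum>k<n - j. T j k)"
    by (subst sum.Sigma) (auto intro: sum.cong)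
  finally show ?thesis .
qed

lemma pow_div_dvd_fact:
  fixes p k :: nat
  assumes "0 < p"
  shows "p ^ (k div p) dvd fact k"
proof -
  let ?m = "k div p"
  have fact_nat: "fact n = \<Prod>{1..n}" for n :: nat
    by (simp only: fact_prod of_nat_id)
  have "p ^ ?m * fact ?m = (\<Prod>i=1..?m. p * i)"
    by (simp add: prod.distrib fact_nat)
  also have "\<dots> = \<Prod>((*) p ` {1..?m})"
    using assms by (simp add: prod.reindex inj_on_def)
  also have "\<dots> dvd \<Prod>{1..p * ?m}"
    by (rule prod_dvd_prod_subset) (use assms in auto)
  also have "\<dots> = fact (p * ?m)"
    by (simp only: fact_nat)
  also have "\<dots> dvd fact k"
    by (rule fact_dvd) simp
  finally show ?thesis
    using dvd_mult_left by blast
qed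

section \<open>The terms of the series \<open>S^y\<close>\<close>

definition S_coeff :: "'a::field_char_0 \<Rightarrow> 'a \<Rightarrow> nat \<Rightarrow> 'a" where
  "S_coeff y x k = (- 1) ^ k * fact k * (y gchoose k) * (x gchoose k)"

definition S_term :: "'a::field_char_0 \<Rightarrow> ('a \<Rightarrow> 'a) \<Rightarrow> 'a \<Rightarrow> nat \<Rightarrow> 'a" where
  "S_term y \<phi> x k = S_coeff y x k * \<phi> (x - of_nat k)"

lemma S_op_eq_nrm_suminf: "S_op nrm y \<phi> x = nrm_suminf nrm (S_term y \<phi> x)"
  unfolding S_op_def S_term_def S_coeff_def ..

lemma fact_mult_gchoose_add:
  fixes x :: "'a::field_char_0"
  shows "fact j * (x gchoose j) * (fact k * ((x - of_nat j) gchoose k))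
    = fact (j + k) * (x gchoose (j + k))"
proof -
  have "(\<Prod>i=0..<k. x - of_nat j - of_nat i) = (\<Prod>i=j..<j + k. x - of_nat i)"
    using prod.shift_bounds_nat_ivl[of "\<lambda>i. x - of_nat i" 0 j k]
    by (simp add: add.commute diff_diff_add)
  then have "(\<Prod>i=0..<j. x - of_nat i) * (\<Prod>i=0..<k. x - of_nat j - of_nat i)
      = (\<Prod>i=0..<j + k. x - of_nat i)"
    using prod.atLeastLessThan_concat[of 0 j "j + k" "\<lambda>i. x - of_nat i"] by simp
  then show ?thesis
    by (simp only: gbinomial_mult_fact)
qed

lemma S_coeff_mult_S_term:
  fixes x y z :: "'a::field_char_0"
  shows "S_coeff y x j * S_term z \<phi> (x - of_nat j) k =
    (- 1) ^ (j + k) * (fact (j + k) * (x gchoose (j + k))) * ((y gchoose j) * (z gchoose k))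
      * \<phi> (x - of_nat (j + k))"
proof -
  have "S_coeff y x j * S_term z \<phi> (x - of_nat j) k =
      (- 1) ^ (j + k) * (fact j * (x gchoose j) * (fact k * ((x - of_nat j) gchoose k)))
        * ((y gchoose j) * (z gchoose k)) * \<phi> (x - of_nat (j + k))"
    by (simp add: S_term_def S_coeff_def power_add algebra_simps)
  then show ?thesis
    by (simp only: fact_mult_gchoose_add)
qed

lemma S_term_add:
  fixes x y z :: "'a::field_char_0"
  shows "(\<Sum>j\<le>n. S_coeff y x j * S_term z \<phi> (x - of_nat j) (n - j)) = S_term (y + z) \<phi> x n"
proof -
  let ?c = "(- 1) ^ n * (fact n * (x gchoose n)) * \<phi> (x - of_nat n)"
  have "(\<Sum>j\<le>n. S_coeff y x j * S_term z \<phi> (x - of_nat j) (n - j))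
      = (\<Sum>j\<le>n. ?c * ((y gchoose j) * (z gchoose (n - j))))"
  proof (rule sum.cong[OF refl])
    fix j
    assume "j \<in> {..n}"
    then have "j + (n - j) = n"
      by simp
    then show "S_coeff y x j * S_term z \<phi> (x - of_nat j) (n - j)
        = ?c * ((y gchoose j) * (z gchoose (n - j)))"
      unfolding S_coeff_mult_S_term by (simp only: ac_simps)
  qed
  also have "\<dots> = ?c * ((y + z) gchoose n)"
    unfolding sum_distrib_left[symmetric] using gbinomial_Vandermonde[of y z n]
    by (simp add: atLeast0AtMost)
  finally show ?thesis
    by (simp add: S_term_def S_coeff_def algebra_simps)
qed

section \<open>Non-archimedean absolute values\<close>

locale nonarch_field =
  fixes nrm :: "'a::field \<Rightarrow> real"
  assumes nonarch_abs: "nonarch_abs nrm"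
begin

lemma nrm_nonneg: "0 \<le> nrm x"
  and nrm_eq_0_iff [simp]: "nrm x = 0 \<longleftrightarrow> x = 0"
  and nrm_mult: "nrm (x * y) = nrm x * nrm y"
  and nrm_add_le_max: "nrm (x + y) \<le> max (nrm x) (nrm y)"
  using nonarch_abs by (auto simp: nonarch_abs_def)

lemma nrm_pos: "x \<noteq> 0 \<Longrightarrow> 0 < nrm x"
  using nrm_nonneg[of x] by (simp add: order_le_less)

lemma nrm_0 [simp]: "nrm 0 = 0"
  by simp

lemma nrm_1 [simp]: "nrm 1 = 1"
  using nrm_mult[of 1 1] nrm_pos[of 1] by simp

lemma nrm_minus [simp]: "nrm (- x) = nrm x"
proof -
  have "nrm (- 1) * nrm (- 1) = 1"
    by (simp flip: nrm_mult)
  then have "nrm (- 1) = 1"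
    using nrm_nonneg[of "- 1"] by (smt (verit) less_1_mult mult_left_le)
  then show ?thesis
    using nrm_mult[of "- 1" x] by simp
qed

lemma nrm_minus_commute: "nrm (x - y) = nrm (y - x)"
  by (metis minus_diff_eq nrm_minus)

lemma nrm_diff_le_max: "nrm (x - y) \<le> max (nrm x) (nrm y)"
  using nrm_add_le_max[of x "- y"] by simp

lemma nrm_triangle: "nrm (x - z) \<le> max (nrm (x - y)) (nrm (y - z))"
  using nrm_add_le_max[of "x - y" "y - z"] by simp

lemma nrm_triangle_add: "nrm (x - z) \<le> nrm (x - y) + nrm (y - z)"
  using nrm_triangle[of x z y] nrm_nonneg[of "x - y"] nrm_nonneg[of "y - z"]
  by (simp add: max_def split: if_split_asm)

lemma nrm_le_max_diff: "nrm x \<le> max (nrm (x - y)) (nrm y)"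
  using nrm_add_le_max[of "x - y" y] by simp

lemma nrm_power: "nrm (x ^ n) = nrm x ^ n"
  by (induction n) (simp_all add: nrm_mult)

lemma nrm_of_nat_le_1: "nrm (of_nat n) \<le> 1"
proof (induction n)
  case (Suc n)
  then show ?case
    using nrm_add_le_max[of 1 "of_nat n"] by simp
qed simp

lemma nrm_of_int_le_1: "nrm (of_int n) \<le> 1"
  by (cases n rule: int_cases)
    (simp_all only: of_int_minus of_int_of_nat_eq nrm_minus nrm_of_nat_le_1)

lemma nrm_sum_le:
  assumes "\<And>i. i \<in> A \<Longrightarrow> nrm (f i) \<le> B" and "0 \<le> B"
  shows "nrm (sum f A) \<le> B"
  using assms
proof (induction A rule: infinite_finite_induct)
  case (insert i A)
  then have "nrm (f i + sum f A) \<le> B"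
    by (intro order_trans[OF nrm_add_le_max]) simp
  with insert.hyps show ?case
    by simp
qed simp_all

lemma nrm_prod_le_1:
  assumes "\<And>i. i \<in> A \<Longrightarrow> nrm (f i) \<le> 1"
  shows "nrm (prod f A) \<le> 1"
  using assms
  by (induction A rule: infinite_finite_induct) (auto simp: nrm_mult intro!: mult_le_one nrm_nonneg)

lemma nrm_prod_diff_le:
  assumes "\<And>i. i \<in> A \<Longrightarrow> nrm (f i) \<le> 1" and "\<And>i. i \<in> A \<Longrightarrow> nrm (g i) \<le> 1"
    and "\<And>i. i \<in> A \<Longrightarrow> nrm (f i - g i) \<le> B" and "0 \<le> B"
  shows "nrm (prod f A - prod g A) \<le> B"
  using assms
proof (induction A rule: infinite_finite_induct)
  case (insert i A)
  have "prod f (insert i A) - prod g (insert i A)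
      = (f i - g i) * prod f A + g i * (prod f A - prod g A)"
    using insert.hyps by (simp add: algebra_simps)
  also have "nrm \<dots> \<le> B"
  proof (rule order_trans[OF nrm_add_le_max max.boundedI])
    have "nrm (f i - g i) * nrm (prod f A) \<le> B * 1"
      using insert.prems by (intro mult_mono nrm_prod_le_1) (auto simp: nrm_nonneg)
    then show "nrm ((f i - g i) * prod f A) \<le> B"
      by (simp add: nrm_mult)
    have "nrm (g i) * nrm (prod f A - prod g A) \<le> 1 * B"
      using insert by (intro mult_mono) (auto simp: nrm_nonneg)
    then show "nrm (g i * (prod f A - prod g A)) \<le> B"
      by (simp add: nrm_mult)
  qed
  finally show ?case .
qed simp_all

definition nrm_cball :: "'a \<Rightarrow> real \<Rightarrow> 'a set" where
  "nrm_cball c \<rho> = {u. nrm (u - c) \<le> \<rho>}"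

text \<open>In an ultrametric space every point of a ball is a centre of it.\<close>

lemma nrm_cball_subset:
  assumes "nrm (c - c') \<le> \<rho>'" and "\<rho> \<le> \<rho>'"
  shows "nrm_cball c \<rho> \<subseteq> nrm_cball c' \<rho>'"
proof
  fix u
  assume "u \<in> nrm_cball c \<rho>"
  then show "u \<in> nrm_cball c' \<rho>'"
    using assms nrm_triangle[of u c' c] by (simp add: nrm_cball_def)
qed

definition nrm_bounded_on :: "('b \<Rightarrow> 'a) \<Rightarrow> 'b set \<Rightarrow> bool" where
  "nrm_bounded_on f A \<longleftrightarrow> (\<exists>M. \<forall>u\<in>A. nrm (f u) \<le> M)"

lemma nrm_bounded_on_subset: "nrm_bounded_on f B \<Longrightarrow> A \<subseteq> B \<Longrightarrow> nrm_bounded_on f A"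
  unfolding nrm_bounded_on_def by blast

lemma nrm_bounded_on_UN:
  assumes "finite I" and "\<And>i. i \<in> I \<Longrightarrow> nrm_bounded_on f (A i)"
  shows "nrm_bounded_on f (\<Union>i\<in>I. A i)"
proof -
  obtain M where M: "\<And>i u. i \<in> I \<Longrightarrow> u \<in> A i \<Longrightarrow> nrm (f u) \<le> M i"
    using assms(2) unfolding nrm_bounded_on_def by metis
  have "nrm (f u) \<le> (\<Sum>i\<in>I. \<bar>M i\<bar>)" if "i \<in> I" "u \<in> A i" for i u
    using M[OF that] member_le_sum[OF that(1), of "\<lambda>i. \<bar>M i\<bar>"] assms(1) by force
  then show ?thesis
    unfolding nrm_bounded_on_def by blast
qed

lemma nrm_conv_iff_tendsto: "nrm_conv nrm s L \<longleftrightarrow> (\<lambda>n. nrm (s n - L)) \<longlonglongrightarrow> 0"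
  by (simp add: nrm_conv_def LIMSEQ_iff nrm_nonneg)

lemma nrm_conv_unique:
  assumes "nrm_conv nrm s L" and "nrm_conv nrm s L'"
  shows "L = L'"
proof -
  have "(\<lambda>n. nrm (L - L')) \<longlonglongrightarrow> 0"
  proof (rule tendsto_0_if_le)
    show "nrm (L - L') \<le> nrm (s n - L) + nrm (s n - L')" for n
      using nrm_triangle_add[of L L' "s n"] nrm_minus_commute[of L "s n"] by linarith
    show "(\<lambda>n. nrm (s n - L) + nrm (s n - L')) \<longlonglongrightarrow> 0"
      using tendsto_add[OF assms[unfolded nrm_conv_iff_tendsto]] by simp
  qed (simp add: nrm_nonneg)
  then have "nrm (L - L') = 0"
    by (simp add: LIMSEQ_const_iff)
  then show ?thesis
    by simp
qed

lemma nrm_suminf_eqI: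
  assumes "nrm_conv nrm (\<lambda>n. \<Sum>k<n. f k) L"
  shows "nrm_suminf nrm f = L"
  unfolding nrm_suminf_def using assms nrm_conv_unique by blast

lemma nrm_conv_mult_left:
  assumes "nrm_conv nrm s L"
  shows "nrm_conv nrm (\<lambda>n. c * s n) (c * L)"
proof -
  have "(\<lambda>n. nrm c * nrm (s n - L)) \<longlonglongrightarrow> 0"
    using tendsto_mult_right_zero assms[unfolded nrm_conv_iff_tendsto] by blast
  then show ?thesis
    by (simp add: nrm_conv_iff_tendsto flip: nrm_mult right_diff_distrib)
qed

lemma nrm_conv_close:
  assumes "nrm_conv nrm s L" and "(\<lambda>n. nrm (t n - s n)) \<longlonglongrightarrow> 0"
  shows "nrm_conv nrm t L"
  unfolding nrm_conv_iff_tendsto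
proof (rule tendsto_0_if_le)
  show "nrm (t n - L) \<le> nrm (t n - s n) + nrm (s n - L)" for n
    by (rule nrm_triangle_add)
  show "(\<lambda>n. nrm (t n - s n) + nrm (s n - L)) \<longlonglongrightarrow> 0"
    using tendsto_add[OF assms(2) assms(1)[unfolded nrm_conv_iff_tendsto]] by simp
qed (simp add: nrm_nonneg)

lemma nrm_conv_tail_le:
  assumes "nrm_conv nrm (\<lambda>n. \<Sum>k<n. f k) L" and "\<And>k. n \<le> k \<Longrightarrow> nrm (f k) \<le> B" and "0 \<le> B"
  shows "nrm (L - (\<Sum>k<n. f k)) \<le> B"
proof (rule LIMSEQ_le_const)
  show "(\<lambda>m. nrm ((\<Sum>k<m. f k) - L) + B) \<longlonglongrightarrow> B"
    using tendsto_add[OF assms(1)[unfolded nrm_conv_iff_tendsto] tendsto_const, of B] by simp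
  have "nrm (L - (\<Sum>k<n. f k)) \<le> nrm ((\<Sum>k<m. f k) - L) + B" if "n \<le> m" for m
  proof -
    have "(\<Sum>k<m. f k) - (\<Sum>k<n. f k) = (\<Sum>k\<in>{n..<m}. f k)"
      using that by (simp add: sum_diff_nat_ivl flip: atLeast0LessThan)
    then have "nrm ((\<Sum>k<m. f k) - (\<Sum>k<n. f k)) \<le> B"
      using assms(2,3) by (auto intro: nrm_sum_le)
    then show ?thesis
      using nrm_triangle_add[of L "\<Sum>k<n. f k" "\<Sum>k<m. f k"] nrm_minus_commute[of L "\<Sum>k<m. f k"]
      by linarith
  qed
  then show "\<exists>N. \<forall>m\<ge>N. nrm (L - (\<Sum>k<n. f k)) \<le> nrm ((\<Sum>k<m. f k) - L) + B"
    by blast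
qed

text \<open>The anti-diagonal partial sums differ from the partial sums of the row sums only by tails
  of the rows, all of whose terms are bounded by \<open>b n\<close>.\<close>

lemma nrm_conv_diagonal_sums:
  assumes rows: "\<And>j. nrm_conv nrm (\<lambda>n. \<Sum>k<n. T j k) (R j)"
    and total: "nrm_conv nrm (\<lambda>n. \<Sum>j<n. R j) L"
    and bound: "\<And>j k. nrm (T j k) \<le> b (j + k)"
    and b_antimono: "\<And>m n. m \<le> n \<Longrightarrow> b n \<le> b m"
    and b_tendsto: "b \<longlonglongrightarrow> 0"
  shows "nrm_conv nrm (\<lambda>n. \<Sum>m<n. \<Sum>j\<le>m. T j (m - j)) L"
proof (rule nrm_conv_close[OF total])
  have "nrm ((\<Sum>m<n. \<Sum>j\<le>m. T j (m - j)) - (\<Sum>j<n. R j)) \<le> b n" for n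
  proof -
    have b_nonneg: "0 \<le> b n"
      using bound[of 0 n] nrm_nonneg[of "T 0 n"] by simp
    have "(\<Sum>m<n. \<Sum>j\<le>m. T j (m - j)) - (\<Sum>j<n. R j) = - (\<Sum>j<n. R j - (\<Sum>k<n - j. T j k))"
      by (simp add: sum_antidiagonals_eq_sum_rows sum_subtractf)
    also have "nrm \<dots> \<le> b n"
      unfolding nrm_minus
    proof (rule nrm_sum_le[OF _ b_nonneg])
      fix j
      assume "j \<in> {..<n}"
      show "nrm (R j - (\<Sum>k<n - j. T j k)) \<le> b n"
      proof (rule nrm_conv_tail_le[OF rows _ b_nonneg])
        fix k
        assume "n - j \<le> k"
        with \<open>j \<in> {..<n}\<close> have "n \<le> j + k"
          by simp
        then show "nrm (T j k) \<le> b n"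
          using bound[of j k] b_antimono by (meson order_trans)
      qed
    qed
    finally show ?thesis .
  qed
  then show "(\<lambda>n. nrm ((\<Sum>m<n. \<Sum>j\<le>m. T j (m - j)) - (\<Sum>j<n. R j))) \<longlonglongrightarrow> 0"
    by (rule tendsto_0_if_le[OF nrm_nonneg _ b_tendsto])
qed

end

locale complete_nonarch_field = nonarch_field +
  assumes complete: "nrm_complete nrm"
begin

text \<open>In an ultrametric field, consecutive differences tending to 0 already make a sequence
  Cauchy.\<close>

lemma nrm_conv_if_steps_tendsto_0:
  assumes steps: "(\<lambda>n. nrm (s (Suc n) - s n)) \<longlonglongrightarrow> 0"
  shows "\<exists>L. nrm_conv nrm s L"
proof -
  have "\<exists>N. \<forall>m\<ge>N. \<forall>n\<ge>N. nrm (s m - s n) < e" if "0 < e" for e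
  proof -
    obtain N where N: "\<And>n. N \<le> n \<Longrightarrow> nrm (s (Suc n) - s n) < e / 2"
      using LIMSEQ_D[OF steps, of "e / 2"] \<open>0 < e\<close> by (auto simp: nrm_nonneg)
    have le: "nrm (s n - s m) \<le> e / 2" if "N \<le> m" "m \<le> n" for m n
    proof -
      have "s n - s m = (\<Sum>i=m..<n. s (Suc i) - s i)"
        using sum_Suc_diff'[OF \<open>m \<le> n\<close>, of s] by simp
      also have "nrm \<dots> \<le> e / 2"
        using N that \<open>0 < e\<close> by (intro nrm_sum_le) (auto intro: less_imp_le)
      finally show ?thesis .
    qed
    have "nrm (s m - s n) < e" if "N \<le> m" "N \<le> n" for m n
      using le[of n m] le[of m n] that \<open>0 < e\<close> nrm_minus_commute[of "s m" "s n"]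
      by (cases "m \<le> n") simp_all
    then show ?thesis
      by blast
  qed
  then show ?thesis
    using complete unfolding nrm_complete_def by blast
qed

lemma nrm_conv_suminf:
  assumes "(\<lambda>k. nrm (f k)) \<longlonglongrightarrow> 0"
  shows "nrm_conv nrm (\<lambda>n. \<Sum>k<n. f k) (nrm_suminf nrm f)"
proof -
  obtain L where "nrm_conv nrm (\<lambda>n. \<Sum>k<n. f k) L"
    using nrm_conv_if_steps_tendsto_0[of "\<lambda>n. \<Sum>k<n. f k"] assms by auto
  with nrm_suminf_eqI show ?thesis
    by simp
qed

end

section \<open>Mixed characteristic: \<open>Z_p\<close> and the operators \<open>S^y\<close>\<close>

locale mixed_char_field = complete_nonarch_field nrm for nrm :: "'a::field_char_0 \<Rightarrow> real" +
  fixes p :: nat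
  assumes p_pos: "0 < p" and nrm_p_less_1: "nrm (of_nat p) < 1"
begin

definition fact_bound :: "nat \<Rightarrow> real" where
  "fact_bound k = nrm (of_nat p) ^ (k div p)"

lemma nrm_fact_le: "nrm (fact k :: 'a) \<le> fact_bound k"
proof -
  obtain c where "fact k = p ^ (k div p) * c"
    using pow_div_dvd_fact[OF p_pos] by blast
  then have "(fact k :: 'a) = of_nat p ^ (k div p) * of_nat c"
    by (metis of_nat_fact of_nat_mult of_nat_power)
  then show ?thesis
    using nrm_of_nat_le_1[of c]
    by (simp add: fact_bound_def nrm_mult nrm_power mult_left_le nrm_nonneg)
qed

lemma fact_bound_antimono: "m \<le> n \<Longrightarrow> fact_bound n \<le> fact_bound m"
  unfolding fact_bound_def
  using nrm_p_less_1 by (intro power_decreasing div_le_mono) (auto simp: nrm_nonneg)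

lemma fact_bound_nonneg: "0 \<le> fact_bound k"
  by (simp add: fact_bound_def nrm_nonneg)

lemma fact_bound_le_1: "fact_bound k \<le> 1"
  using fact_bound_antimono[of 0 k] by (simp add: fact_bound_def)

lemma fact_bound_tendsto_0: "fact_bound \<longlonglongrightarrow> 0"
  unfolding fact_bound_def[abs_def]
  using nrm_p_less_1 nrm_nonneg[of "of_nat p"]
  by (intro filterlim_compose[OF LIMSEQ_power_zero filterlim_at_top_div_const_nat[OF p_pos]]) simp

lemma Zp_nrm_le_1:
  assumes "u \<in> Zp nrm"
  shows "nrm u \<le> 1"
proof -
  obtain n :: int where "nrm (u - of_int n) < 1"
    using assms unfolding Zp_def by force
  then show ?thesis
    using nrm_le_max_diff[of u "of_int n"] nrm_of_int_le_1[of n] by simp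
qed

lemma Zp_diff_of_nat:
  assumes "u \<in> Zp nrm"
  shows "u - of_nat j \<in> Zp nrm"
  unfolding Zp_def
proof (intro CollectI allI impI)
  fix e :: real
  assume "0 < e"
  then obtain n :: int where "nrm (u - of_int n) < e"
    using assms unfolding Zp_def by force
  moreover have "u - of_nat j - of_int (n - int j) = u - of_int n"
    by simp
  ultimately show "\<exists>n::int. nrm (u - of_nat j - of_int n) < e"
    by metis
qed

lemma of_nat_limit_in_Zp:
  assumes "nrm_conv nrm (\<lambda>n. of_nat (c n)) L"
  shows "L \<in> Zp nrm"
  unfolding Zp_def
proof (intro CollectI allI impI)
  fix e :: real
  assume "0 < e"
  then obtain n where "nrm (of_nat (c n) - L) < e"
    using assms unfolding nrm_conv_def by blast
  then have "nrm (L - of_int (int (c n))) < e"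
    by (simp add: nrm_minus_commute)
  then show "\<exists>n::int. nrm (L - of_int n) < e"
    by blast
qed

lemma Zp_approx_of_nat:
  assumes "u \<in> Zp nrm"
  shows "\<exists>r<p ^ m. nrm (u - of_nat r) \<le> nrm (of_nat p) ^ m"
proof -
  have "0 < nrm (of_nat p :: 'a) ^ m"
    using p_pos by (simp add: nrm_pos)
  then obtain n :: int where n: "nrm (u - of_int n) < nrm (of_nat p) ^ m"
    using assms unfolding Zp_def by force
  define r where "r = nat (n mod int (p ^ m))"
  have "r < p ^ m"
    using p_pos by (simp add: r_def nat_less_iff)
  have "n = int (p ^ m) * (n div int (p ^ m)) + int r"
    using p_pos by (simp add: r_def)
  then have "(of_int n :: 'a) - of_nat r = of_nat p ^ m * of_int (n div int (p ^ m))"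
    by (metis add_diff_cancel_right' of_int_add of_int_mult of_int_of_nat_eq of_nat_power)
  then have "nrm ((of_int n :: 'a) - of_nat r) \<le> nrm (of_nat p) ^ m"
    using nrm_of_int_le_1[of "n div int (p ^ m)"]
    by (simp add: nrm_mult nrm_power mult_left_le nrm_nonneg)
  with n have "nrm (u - of_nat r) \<le> nrm (of_nat p) ^ m"
    using nrm_triangle[of u "of_nat r" "of_int n"] by simp
  with \<open>r < p ^ m\<close> show ?thesis
    by blast
qed

lemma nrm_of_int_gchoose_le_1: "nrm ((of_int n :: 'a) gchoose k) \<le> 1"
proof (cases "0 \<le> n")
  case True
  then have "(of_int n :: 'a) gchoose k = of_nat (nat n choose k)"
    by (metis binomial_gbinomial int_nat_eq of_int_of_nat_eq)
  then show ?thesis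
    using nrm_of_nat_le_1 by simp
next
  case False
  then have "(of_nat k - of_int n - 1 :: 'a) = of_nat (k + nat (- n) - 1)"
    by simp
  then have "(of_int n :: 'a) gchoose k = (- 1) ^ k * of_nat ((k + nat (- n) - 1) choose k)"
    by (simp add: gbinomial_negated_upper[of "of_int n"] binomial_gbinomial)
  then show ?thesis
    using nrm_of_nat_le_1 by (simp add: nrm_mult nrm_power)
qed

text \<open>The falling factorial \<open>k! (a choose k)\<close> is 1-Lipschitz on the unit ball, and \<open>Z\<close> is
  dense in \<open>Z_p\<close>, so \<open>(a choose k)\<close> is within \<open>|a - n| / |k!| < 1\<close> of an integer.\<close>

lemma nrm_gchoose_le_1:
  assumes "a \<in> Zp nrm"
  shows "nrm (a gchoose k) \<le> 1"
proof -
  have fact_pos: "0 < nrm (fact k :: 'a)"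
    by (simp add: nrm_pos)
  then obtain n :: int where n: "nrm (a - of_int n) < nrm (fact k :: 'a)"
    using assms unfolding Zp_def by force
  have "nrm (fact k :: 'a) * nrm ((a gchoose k) - (of_int n gchoose k))
      = nrm (fact k * (a gchoose k) - fact k * (of_int n gchoose k))"
    by (metis nrm_mult right_diff_distrib)
  also have "\<dots> \<le> nrm (a - of_int n)"
    unfolding gbinomial_mult_fact
  proof (rule nrm_prod_diff_le)
    show "nrm (a - of_nat i) \<le> 1" and "nrm ((of_int n :: 'a) - of_nat i) \<le> 1" for i
      using nrm_diff_le_max[of a "of_nat i"] nrm_diff_le_max[of "of_int n" "of_nat i"]
        Zp_nrm_le_1[OF assms] nrm_of_nat_le_1[of i] nrm_of_int_le_1[of n] by simp_all
  qed (simp_all add: nrm_nonneg)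
  finally have "nrm (fact k :: 'a) * nrm ((a gchoose k) - (of_int n gchoose k))
      < nrm (fact k :: 'a) * 1"
    using n by simp
  then have "nrm ((a gchoose k) - (of_int n gchoose k)) < 1"
    using fact_pos by (simp only: mult_less_cancel_left_pos)
  then show ?thesis
    using nrm_le_max_diff[of "a gchoose k" "of_int n gchoose k"] nrm_of_int_gchoose_le_1[of n k]
    by simp
qed

lemma CZp_bounded_near:
  assumes "\<phi> \<in> CZp nrm" and "L \<in> Zp nrm"
  obtains d where "0 < d" and "nrm_bounded_on \<phi> (Zp nrm \<inter> nrm_cball L d)"
proof -
  have "\<forall>e>0. \<exists>d>0. \<forall>u\<in>Zp nrm. nrm (u - L) < d \<longrightarrow> nrm (\<phi> u - \<phi> L) < e"
    using assms unfolding CZp_def by blast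
  then obtain d where "0 < d" and d: "\<forall>u\<in>Zp nrm. nrm (u - L) < d \<longrightarrow> nrm (\<phi> u - \<phi> L) < 1"
    using zero_less_one by blast
  have "nrm (\<phi> u) \<le> max 1 (nrm (\<phi> L))" if "u \<in> Zp nrm \<inter> nrm_cball L (d / 2)" for u
  proof -
    have "nrm (\<phi> u - \<phi> L) < 1"
      using that d \<open>0 < d\<close> by (simp add: nrm_cball_def)
    then show ?thesis
      using nrm_le_max_diff[of "\<phi> u" "\<phi> L"] by simp
  qed
  then show ?thesis
    using that[of "d / 2"] \<open>0 < d\<close> unfolding nrm_bounded_on_def by auto
qed

lemma unbounded_on_smaller_cball:
  assumes "\<not> nrm_bounded_on \<phi> (Zp nrm \<inter> nrm_cball (of_nat r) (nrm (of_nat p) ^ n))"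
  shows "\<exists>r'. \<not> nrm_bounded_on \<phi> (Zp nrm \<inter> nrm_cball (of_nat r') (nrm (of_nat p) ^ Suc n))
    \<and> nrm (of_nat r' - of_nat r :: 'a) \<le> nrm (of_nat p) ^ n"
proof -
  let ?q = "nrm (of_nat p :: 'a)"
  let ?B = "Zp nrm \<inter> nrm_cball (of_nat r) (?q ^ n)"
  have "?B \<subseteq> (\<Union>r'<p ^ Suc n. ?B \<inter> nrm_cball (of_nat r') (?q ^ Suc n))"
  proof
    fix u
    assume "u \<in> ?B"
    then obtain r' where "r' < p ^ Suc n" and "nrm (u - of_nat r') \<le> ?q ^ Suc n"
      using Zp_approx_of_nat by blast
    with \<open>u \<in> ?B\<close> show "u \<in> (\<Union>r'<p ^ Suc n. ?B \<inter> nrm_cball (of_nat r') (?q ^ Suc n))"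
      by (auto simp: nrm_cball_def)
  qed
  then have "\<not> nrm_bounded_on \<phi> (\<Union>r'<p ^ Suc n. ?B \<inter> nrm_cball (of_nat r') (?q ^ Suc n))"
    using assms nrm_bounded_on_subset by blast
  then obtain r' where r': "\<not> nrm_bounded_on \<phi> (?B \<inter> nrm_cball (of_nat r') (?q ^ Suc n))"
    using nrm_bounded_on_UN[where I="{..<p ^ Suc n}" and f=\<phi>
        and A="\<lambda>r'. ?B \<inter> nrm_cball (of_nat r') (?q ^ Suc n)"] by blast
  then obtain u where u: "u \<in> ?B \<inter> nrm_cball (of_nat r') (?q ^ Suc n)"
    unfolding nrm_bounded_on_def by auto
  have "?q ^ Suc n \<le> ?q ^ n"
    using nrm_p_less_1 nrm_nonneg[of "of_nat p"] by (simp add: mult_left_le_one_le)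
  then have "nrm (of_nat r' - of_nat r :: 'a) \<le> ?q ^ n"
    using u nrm_triangle[of "of_nat r'" "of_nat r" u] nrm_minus_commute[of "of_nat r'" u]
    by (auto simp: nrm_cball_def)
  moreover have "\<not> nrm_bounded_on \<phi> (Zp nrm \<inter> nrm_cball (of_nat r') (?q ^ Suc n))"
    using r' nrm_bounded_on_subset[of \<phi> _ "?B \<inter> nrm_cball (of_nat r') (?q ^ Suc n)"] by blast
  ultimately show ?thesis
    by blast
qed

text \<open>Were \<open>\<phi>\<close> unbounded, repeated subdivision would give nested balls of radius
  \<open>|p|^n\<close> on each of which \<open>\<phi>\<close> is unbounded; their centres converge to a point of
  \<open>Z_p\<close> near which \<open>\<phi>\<close> is bounded.\<close>

lemma CZp_bounded:
  assumes "\<phi> \<in> CZp nrm"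
  shows "nrm_bounded_on \<phi> (Zp nrm)"
proof (rule ccontr)
  let ?q = "nrm (of_nat p :: 'a)"
  let ?B = "\<lambda>n r. Zp nrm \<inter> nrm_cball (of_nat r) (?q ^ n)"
  assume unbounded: "\<not> nrm_bounded_on \<phi> (Zp nrm)"
  have "\<exists>c. \<forall>n. \<not> nrm_bounded_on \<phi> (?B n (c n))
      \<and> nrm (of_nat (c (Suc n)) - of_nat (c n) :: 'a) \<le> ?q ^ n"
  proof (rule dependent_nat_choice)
    have "?B 0 0 = Zp nrm"
      using Zp_nrm_le_1 by (auto simp: nrm_cball_def)
    then show "\<exists>r. \<not> nrm_bounded_on \<phi> (?B 0 r)"
      using unbounded by (intro exI[of _ 0]) simp
  next
    show "\<exists>r'. \<not> nrm_bounded_on \<phi> (?B (Suc n) r') \<and> nrm (of_nat r' - of_nat r :: 'a) \<le> ?q ^ n"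
      if "\<not> nrm_bounded_on \<phi> (?B n r)" for r n
      using unbounded_on_smaller_cball[OF that] .
  qed
  then obtain c where unbounded_c: "\<And>n. \<not> nrm_bounded_on \<phi> (?B n (c n))"
    and steps: "\<And>n. nrm (of_nat (c (Suc n)) - of_nat (c n) :: 'a) \<le> ?q ^ n"
    by blast
  have q_tendsto: "(\<lambda>n. ?q ^ n) \<longlonglongrightarrow> 0"
    using nrm_p_less_1 nrm_nonneg[of "of_nat p"] by (intro LIMSEQ_power_zero) simp
  obtain L where L: "nrm_conv nrm (\<lambda>n. of_nat (c n)) L"
    using nrm_conv_if_steps_tendsto_0[OF tendsto_0_if_le[OF nrm_nonneg steps q_tendsto]] by blast
  obtain d where "0 < d" and bounded: "nrm_bounded_on \<phi> (Zp nrm \<inter> nrm_cball L d)"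
    using CZp_bounded_near[OF assms of_nat_limit_in_Zp[OF L]] .
  have "\<forall>\<^sub>F n in sequentially. nrm (of_nat (c n) - L) < d \<and> ?q ^ n < d"
    using L q_tendsto \<open>0 < d\<close> unfolding nrm_conv_iff_tendsto
    by (intro eventually_conj order_tendstoD(2)) auto
  then obtain n where "nrm (of_nat (c n) - L) < d" and "?q ^ n < d"
    unfolding eventually_sequentially by auto
  then have "?B n (c n) \<subseteq> Zp nrm \<inter> nrm_cball L d"
    using nrm_cball_subset[of "of_nat (c n)" L d "?q ^ n"] by auto
  with bounded unbounded_c[of n] show False
    using nrm_bounded_on_subset by blast
qed

lemma nrm_fact_mult_gchoose_le:
  assumes "u \<in> Zp nrm"
  shows "nrm (fact k * (u gchoose k)) \<le> fact_bound k"
  using mult_mono[OF nrm_fact_le nrm_gchoose_le_1[OF assms] fact_bound_nonneg nrm_nonneg]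
  by (simp add: nrm_mult)

lemma nrm_S_coeff_le:
  assumes "a \<in> Zp nrm" and "u \<in> Zp nrm"
  shows "nrm (S_coeff a u k) \<le> fact_bound k"
proof -
  have "nrm (S_coeff a u k) = nrm (fact k * (u gchoose k)) * nrm (a gchoose k)"
    by (simp add: S_coeff_def nrm_mult nrm_power)
  also have "\<dots> \<le> fact_bound k * 1"
    using nrm_fact_mult_gchoose_le[OF assms(2)] nrm_gchoose_le_1[OF assms(1)]
    by (intro mult_mono) (simp_all add: nrm_nonneg fact_bound_nonneg)
  finally show ?thesis
    by simp
qed

lemma nrm_S_term_le:
  assumes "a \<in> Zp nrm" and "u \<in> Zp nrm" and "\<forall>v\<in>Zp nrm. nrm (\<psi> v) \<le> M"
  shows "nrm (S_term a \<psi> u k) \<le> fact_bound k * M"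
  unfolding S_term_def nrm_mult
  using nrm_S_coeff_le[OF assms(1,2)] assms(3) Zp_diff_of_nat[OF assms(2)]
  by (intro mult_mono) (simp_all add: nrm_nonneg fact_bound_nonneg)

lemma nrm_S_coeff_mult_S_term_le:
  assumes "x \<in> Zp nrm" and "y \<in> Zp nrm" and "z \<in> Zp nrm" and "\<forall>v\<in>Zp nrm. nrm (\<phi> v) \<le> M"
  shows "nrm (S_coeff y x j * S_term z \<phi> (x - of_nat j) k) \<le> fact_bound (j + k) * M"
proof -
  have "nrm (S_coeff y x j * S_term z \<phi> (x - of_nat j) k) =
      nrm (fact (j + k) * (x gchoose (j + k))) * (nrm (y gchoose j) * nrm (z gchoose k))
        * nrm (\<phi> (x - of_nat (j + k)))"
    by (simp add: S_coeff_mult_S_term nrm_mult nrm_power)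
  also have "\<dots> \<le> fact_bound (j + k) * (1 * 1) * M"
    using nrm_fact_mult_gchoose_le[OF assms(1)]
      nrm_gchoose_le_1[OF assms(2)] nrm_gchoose_le_1[OF assms(3)]
      bspec[OF assms(4) Zp_diff_of_nat[OF assms(1), of "j + k"]]
    by (intro mult_mono) (auto simp: nrm_nonneg fact_bound_nonneg)
  finally show ?thesis
    by simp
qed

lemma S_op_conv:
  assumes "a \<in> Zp nrm" and "u \<in> Zp nrm" and "\<forall>v\<in>Zp nrm. nrm (\<psi> v) \<le> M"
  shows "nrm_conv nrm (\<lambda>n. \<Sum>k<n. S_term a \<psi> u k) (S_op nrm a \<psi> u)"
  unfolding S_op_eq_nrm_suminf
  using nrm_S_term_le[OF assms] tendsto_mult_left_zero[OF fact_bound_tendsto_0]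
  by (intro nrm_conv_suminf tendsto_0_if_le[OF nrm_nonneg])

lemma nrm_S_op_le:
  assumes "a \<in> Zp nrm" and "u \<in> Zp nrm" and "\<forall>v\<in>Zp nrm. nrm (\<psi> v) \<le> M"
  shows "nrm (S_op nrm a \<psi> u) \<le> M"
proof -
  have "0 \<le> M"
    using assms(2,3) nrm_nonneg order_trans by blast
  have "nrm (S_term a \<psi> u k) \<le> M" for k
    using nrm_S_term_le[OF assms, of k]
      mult_left_le_one_le[OF \<open>0 \<le> M\<close> fact_bound_nonneg fact_bound_le_1]
    by (rule order_trans)
  then have "nrm (S_op nrm a \<psi> u - (\<Sum>k<0. S_term a \<psi> u k)) \<le> M"
    using nrm_conv_tail_le[OF S_op_conv[OF assms] _ \<open>0 \<le> M\<close>] by blast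
  then show ?thesis
    by simp
qed

lemma S_op_add:
  assumes y: "y \<in> Zp nrm" and z: "z \<in> Zp nrm" and x: "x \<in> Zp nrm"
    and \<phi>_le: "\<forall>v\<in>Zp nrm. nrm (\<phi> v) \<le> M"
  shows "S_op nrm (y + z) \<phi> x = S_op nrm y (S_op nrm z \<phi>) x"
proof -
  define T where "T j k = S_coeff y x j * S_term z \<phi> (x - of_nat j) k" for j k
  have "0 \<le> M"
    using \<phi>_le x nrm_nonneg order_trans by blast
  have rows: "nrm_conv nrm (\<lambda>n. \<Sum>k<n. T j k) (S_term y (S_op nrm z \<phi>) x j)" for j
    using nrm_conv_mult_left[OF S_op_conv[OF z Zp_diff_of_nat[OF x] \<phi>_le], of "S_coeff y x j"]
    by (simp only: T_def S_term_def[of y] sum_distrib_left)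
  have total: "nrm_conv nrm (\<lambda>n. \<Sum>j<n. S_term y (S_op nrm z \<phi>) x j) (S_op nrm y (S_op nrm z \<phi>) x)"
    using S_op_conv[OF y x] nrm_S_op_le[OF z _ \<phi>_le] by blast
  have "nrm_conv nrm (\<lambda>n. \<Sum>m<n. \<Sum>j\<le>m. T j (m - j)) (S_op nrm y (S_op nrm z \<phi>) x)"
    using nrm_S_coeff_mult_S_term_le[OF x y z \<phi>_le] \<open>0 \<le> M\<close> fact_bound_antimono
      tendsto_mult_left_zero[OF fact_bound_tendsto_0]
    by (intro nrm_conv_diagonal_sums[OF rows total, where b="\<lambda>n. fact_bound n * M"])
      (auto simp: T_def intro: mult_right_mono)
  then show ?thesis
    by (simp add: T_def S_term_add S_op_eq_nrm_suminf nrm_suminf_eqI)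
qed

end

theorem proposition6p3:
  fixes nrm :: "'a::field_char_0 \<Rightarrow> real" and p :: nat
    and y z :: 'a and \<phi> :: "'a \<Rightarrow> 'a"
  assumes "is_Cp p nrm"
    and "y \<in> Zp nrm" and "z \<in> Zp nrm"
    and "\<phi> \<in> CZp nrm"
  shows "\<forall>x\<in>Zp nrm. S_op nrm (y + z) \<phi> x = S_op nrm y (S_op nrm z \<phi>) x"
proof -
  have "prime p" and nrm_p: "nrm (of_nat p :: 'a) = 1 / real p"
    using assms(1) by (simp_all add: is_Cp_def)
  then have "1 < p"
    using prime_gt_1_nat by blast
  interpret mixed_char_field nrm p
    using assms(1) \<open>1 < p\<close> nrm_p by unfold_locales (simp_all add: is_Cp_def)
  obtain M where "\<forall>v\<in>Zp nrm. nrm (\<phi> v) \<le> M"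
    using CZp_bounded[OF assms(4)] unfolding nrm_bounded_on_def by blast
  then show ?thesis
    using S_op_add[OF assms(2,3)] by blast
qed

end
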